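(* For every $d\ge 3$, the group $G_d$ is non-contracting: there is no finite subset $S\subseteq G_d$ such that for every $g\in G_d$ there exists $k\in\mathbb N$ with $g|_u\in S$ for all vertices $u$ with $|u|\ge k$.
   Context: Let $d\ge 3$, $X=\{1,\dots,d\}$, $X^*$ the free monoid on $X$, and $T$ the $d$-regular rooted tree with vertex set $X^*$. $\mathrm{Aut}(T)$ is the group of root-preserving tree automorphisms, with product written left-to-right: $(gh)(u)=h(g(u))$. For $g\in\mathrm{Aut}(T)$ and $u\in X^*$ the section $g|_u$ is defined by $g(uv)=g(u)\,g|_u(v)$. We write $g=(g|_1,\dots,g|_d)\lambda_g$, where $\lambda_g\in S_d$ is the permutation induced by $g$ on $X$, and $e$ is the identity. $\overline{j}\in\{1,\dots,d\}$ denotes $j$ mod $d$. The group $G_d\le \mathrm{Aut}(T)$ is generated by $A=\{a_1,\dots,a_d\}$, where $a_i$ acts on the first level as the transposition $(i\ \overline{i+1})$, with sections $a_i|_i=a_i$, $a_i|_{\overline{i+1}}=a_{\overline{i+1}}$, and $a_i|_x=e$ otherwise (e.g. $a_1=(a_1,a_2,e,\dots,e)(1\,2)$, $a_d=(a_1,e,\dots,e,a_d)(d\ 1)$). *)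

theory Defs
  imports Main
begin

text \<open>Vertices of the d-regular rooted tree are words (lists) over X = {1..d}.
  Tree automorphisms are represented as functions on nat lists; the generators
  (and hence all elements of G_d) fix every letter outside X, so they are determined
  by their action on X*.\<close>

definition nxt :: "nat \<Rightarrow> nat \<Rightarrow> nat" where
  "nxt d i = (if i = d then 1 else i + 1)"

fun gen :: "nat \<Rightarrow> nat \<Rightarrow> nat list \<Rightarrow> nat list" where
  "gen d i [] = []"
| "gen d i (x # v) =
     (if x = i then nxt d i # gen d i v
      else if x = nxt d i then i # gen d (nxt d i) v
      else x # v)"

inductive_set Gd :: "nat \<Rightarrow> (nat list \<Rightarrow> nat list) set" for d :: nat where
  ident: "id \<in> Gd d"
| gen_mult: "\<lbrakk>g \<in> Gd d; i \<in> {1..d}\<rbrakk> \<Longrightarrow> g \<circ> gen d i \<in> Gd d"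
| gen_inv_mult: "\<lbrakk>g \<in> Gd d; i \<in> {1..d}\<rbrakk> \<Longrightarrow> g \<circ> inv (gen d i) \<in> Gd d"

text \<open>Section g|_u, defined by g(uv) = g(u) g|_u(v).\<close>
definition sect :: "(nat list \<Rightarrow> nat list) \<Rightarrow> nat list \<Rightarrow> nat list \<Rightarrow> nat list" where
  "sect g u = (\<lambda>v. drop (length u) (g (u @ v)))"

end

theory Submission
  imports Defs "HOL-Number_Theory.Cong"
begin

(* Write t_r = a_r a_(r+1) ... a_(r+d-1) and s_r = a_(r+d-1) ... a_(r+1) a_r, indices mod d.
   Since t_r fixes the letter r with section t_r there, every power of t_r is its own section
   along r r r ...; a finite nucleus would contain all of them, so the bijection t_r would have
   finite order. But t_r permutes the letters r+1, ..., r+d-1 in a (d-1)-cycle and t_r^(d-1)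
   has section s_(r+2) at r+1; symmetrically s_r^(d-1) has section t_(r-1) at r-1. Hence
   t_r^N = 1 forces s_(r+2)^(N/(d-1)) = 1 and vice versa, an infinite descent since d-1 >= 2. *)

definition rot :: "nat \<Rightarrow> nat \<Rightarrow> nat \<Rightarrow> nat" where
  "rot d r j = (r - 1 + j) mod d + 1"

lemma rot_0: "1 \<le> r \<Longrightarrow> r \<le> d \<Longrightarrow> rot d r 0 = r"
  unfolding rot_def by simp

lemma rot_in_letters: "0 < d \<Longrightarrow> rot d r j \<in> {1..d}"
  unfolding rot_def by (simp add: Suc_leI)

lemma rot_rot: "0 < d \<Longrightarrow> rot d (rot d r a) b = rot d r (a + b)"
  unfolding rot_def by (simp add: mod_add_left_eq add.assoc)

lemma rot_add_self: "rot d r (d + j) = rot d r j"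
  unfolding rot_def by (metis add.assoc add.commute mod_add_self2)

lemma rot_eq_iff: "a < d \<Longrightarrow> b < d \<Longrightarrow> rot d r a = rot d r b \<longleftrightarrow> a = b"
proof
  assume "a < d" "b < d" "rot d r a = rot d r b"
  then have "[r - 1 + a = r - 1 + b] (mod d)"
    by (simp add: rot_def cong_def)
  then have "[a = b] (mod d)"
    by (simp add: cong_add_lcancel_nat)
  then show "a = b"
    using \<open>a < d\<close> \<open>b < d\<close> by (simp add: cong_def)
qed simp

lemma nxt_rot: "0 < d \<Longrightarrow> nxt d (rot d r j) = rot d r (Suc j)"
proof -
  assume "0 < d"
  define m where "m = r - 1 + j"
  have "r - 1 + Suc j = Suc m"
    by (simp add: m_def)
  moreover have "Suc m mod d = (if m mod d + 1 = d then 0 else Suc (m mod d))"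
    using \<open>0 < d\<close> by (simp add: mod_Suc)
  ultimately show ?thesis
    unfolding rot_def nxt_def m_def[symmetric] by auto
qed

lemma nxt_rot_last: "Suc n = d \<Longrightarrow> nxt d (rot d r n) = rot d r 0"
  using nxt_rot[of d r n] rot_add_self[of d r 0] by auto

(* As g \<circ> h is the paper's product h g, up_prod d r k is a_r a_(r+1) ... a_(r+k-1)
   and down_prod d r k is a_(r+k-1) ... a_(r+1) a_r; so t_r = up_prod d r d, s_r = down_prod d r d. *)

fun up_prod :: "nat \<Rightarrow> nat \<Rightarrow> nat \<Rightarrow> nat list \<Rightarrow> nat list" where
  "up_prod d r 0 = id"
| "up_prod d r (Suc k) = gen d (rot d r k) \<circ> up_prod d r k"

fun down_prod :: "nat \<Rightarrow> nat \<Rightarrow> nat \<Rightarrow> nat list \<Rightarrow> nat list" where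
  "down_prod d r 0 = id"
| "down_prod d r (Suc k) = down_prod d r k \<circ> gen d (rot d r k)"

lemma up_prod_first:
  "0 < d \<Longrightarrow> up_prod d r k (rot d r 0 # v) = rot d r k # up_prod d r k v"
  by (induction k) (simp_all add: nxt_rot)

lemma up_prod_beyond:
  "k < j \<Longrightarrow> j < d \<Longrightarrow> up_prod d r k (rot d r j # v) = rot d r j # v"
  by (induction k) (simp_all add: nxt_rot rot_eq_iff)

lemma up_prod_below:
  "1 \<le> j \<Longrightarrow> j \<le> k \<Longrightarrow> k < d \<Longrightarrow>
    up_prod d r k (rot d r j # v) = rot d r (j - 1) # gen d (rot d r j) v"
proof (induction k)
  case (Suc k)
  show ?case
  proof (cases "j = Suc k")
    case True
    then show ?thesis
      using Suc.prems up_prod_beyond[of k "Suc k" d r v] by (simp add: nxt_rot rot_eq_iff)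
  next
    case False
    then show ?thesis
      using Suc by (auto simp: nxt_rot rot_eq_iff)
  qed
qed simp

lemma down_prod_beyond:
  "k < j \<Longrightarrow> j < d \<Longrightarrow> down_prod d r k (rot d r j # v) = rot d r j # v"
  by (induction k) (simp_all add: nxt_rot rot_eq_iff)

lemma down_prod_below:
  "j < k \<Longrightarrow> k < d \<Longrightarrow>
    down_prod d r k (rot d r j # v) = rot d r (Suc j) # gen d (rot d r j) v"
proof (induction k)
  case (Suc k)
  show ?case
  proof (cases "j = k")
    case True
    then show ?thesis
      using Suc.prems down_prod_beyond[of k "Suc k" d r] by (simp add: nxt_rot rot_eq_iff)
  next
    case False
    then show ?thesis
      using Suc by (simp add: nxt_rot rot_eq_iff)
  qed
qed simp

lemma up_prod_full: "0 < d \<Longrightarrow> up_prod d r d = gen d (rot d r (d - 1)) \<circ> up_prod d r (d - 1)"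
  by (metis Suc_diff_1 up_prod.simps(2))

lemma down_prod_full: "0 < d \<Longrightarrow> down_prod d r d = down_prod d r (d - 1) \<circ> gen d (rot d r (d - 1))"
  by (metis Suc_diff_1 down_prod.simps(2))

lemma up_prod_Suc_left:
  "0 < d \<Longrightarrow> up_prod d r (Suc m) = up_prod d (rot d r 1) m \<circ> gen d (rot d r 0)"
proof (induction m)
  case (Suc m)
  have "up_prod d r (Suc (Suc m)) = gen d (rot d r (Suc m)) \<circ> up_prod d r (Suc m)"
    by simp
  also have "\<dots> = gen d (rot d r (Suc m)) \<circ> (up_prod d (rot d r 1) m \<circ> gen d (rot d r 0))"
    by (simp only: Suc.IH[OF Suc.prems])
  also have "\<dots> = up_prod d (rot d r 1) (Suc m) \<circ> gen d (rot d r 0)"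
    using Suc.prems by (simp add: rot_rot comp_assoc)
  finally show ?case .
qed simp

lemma up_full_fix: "0 < d \<Longrightarrow> up_prod d r d (rot d r 0 # v) = rot d r 0 # up_prod d r d v"
  using up_prod_first[of d r d v] rot_add_self[of d r 0] by simp

lemma up_full_second:
  "2 \<le> d \<Longrightarrow>
    up_prod d r d (rot d r 1 # v) = rot d r (d - 1) # gen d (rot d r 0) (gen d (rot d r 1) v)"
  using up_prod_below[of 1 "d - 1" d r v]
  by (simp add: up_prod_full nxt_rot_last rot_eq_iff)

lemma up_full_mid:
  "2 \<le> j \<Longrightarrow> j < d \<Longrightarrow> up_prod d r d (rot d r j # v) = rot d r (j - 1) # gen d (rot d r j) v"
  using up_prod_below[of j "d - 1" d r v]
  by (auto simp: up_prod_full nxt_rot_last rot_eq_iff)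

lemma down_full_last:
  "2 \<le> d \<Longrightarrow>
    down_prod d r d (rot d r (d - 1) # v) = rot d r 1 # gen d (rot d r 0) (gen d (rot d r (d - 1)) v)"
  using down_prod_below[of 0 "d - 1" d r]
  by (simp add: down_prod_full nxt_rot_last)

lemma down_full_mid:
  "1 \<le> j \<Longrightarrow> j + 2 \<le> d \<Longrightarrow>
    down_prod d r d (rot d r j # v) = rot d r (Suc j) # gen d (rot d r j) v"
  using down_prod_below[of j "d - 1" d r v]
  by (simp add: down_prod_full nxt_rot_last rot_eq_iff)

lemma up_full_pow_mid:
  "1 \<le> i \<Longrightarrow> i + m < d \<Longrightarrow>
    (up_prod d r d ^^ m) (rot d r (i + m) # v) = rot d r i # down_prod d (rot d r (Suc i)) m v"
proof (induction m arbitrary: v)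
  case (Suc m)
  then show ?case
    unfolding funpow_Suc_right comp_def by (simp add: up_full_mid rot_rot)
qed simp

lemma down_full_pow_mid:
  "1 \<le> i \<Longrightarrow> i + m < d \<Longrightarrow>
    (down_prod d r d ^^ m) (rot d r i # v) = rot d r (i + m) # up_prod d (rot d r i) m v"
proof (induction m arbitrary: v)
  case (Suc m)
  then show ?case
    by (simp add: down_full_mid rot_rot)
qed simp

lemma up_full_pow_orbit:
  assumes "m + 2 \<le> d"
  shows "(up_prod d r d ^^ Suc m) (rot d r 1 # v) =
    rot d r (d - 1 - m) # down_prod d (rot d r (d - m)) m (gen d (rot d r 0) (gen d (rot d r 1) v))"
proof -
  have "up_prod d r d (rot d r 1 # v) = rot d r (d - 1 - m + m) # gen d (rot d r 0) (gen d (rot d r 1) v)"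
    using assms up_full_second[of d r v] by simp
  then show ?thesis
    unfolding funpow_Suc_right comp_def
    using assms up_full_pow_mid[of "d - 1 - m" m d r] by (simp add: Suc_diff_Suc)
qed

lemma down_full_pow_orbit:
  assumes "m + 2 \<le> d"
  shows "(down_prod d r d ^^ Suc m) (rot d r (d - 1) # v) =
    rot d r (Suc m) # up_prod d (rot d r 1) m (gen d (rot d r 0) (gen d (rot d r (d - 1)) v))"
  unfolding funpow_Suc_right comp_def
  using assms down_full_last[of d r v] down_full_pow_mid[of 1 m d r] by simp

lemma up_full_pow_return:
  assumes "3 \<le> d"
  shows "(up_prod d r d ^^ (d - 1)) (rot d r 1 # v) = rot d r 1 # down_prod d (rot d r 2) d v"
proof -
  obtain k where d: "d = Suc (Suc k)"
    using assms by (metis le_Suc_ex numeral_3_eq_3 add_Suc)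
  have "rot d (rot d r 2) k = rot d r 0" "rot d (rot d r 2) (Suc k) = rot d r 1"
    using rot_rot[of d r 2] rot_add_self[of d r 0] rot_add_self[of d r 1] d by simp_all
  then show ?thesis
    using up_full_pow_orbit[of k d r v] d by (simp add: numeral_2_eq_2)
qed

lemma down_full_pow_return:
  assumes "3 \<le> d"
  shows "(down_prod d r d ^^ (d - 1)) (rot d r (d - 1) # v) =
    rot d r (d - 1) # up_prod d (rot d r (d - 1)) d v"
proof -
  obtain k where d: "d = Suc (Suc k)"
    using assms by (metis le_Suc_ex numeral_3_eq_3 add_Suc)
  let ?s = "rot d r (d - 1)"
  have "rot d ?s 0 = ?s" "rot d ?s 1 = rot d r 0" "rot d (rot d ?s 1) 1 = rot d r 1"
    "rot d (rot d ?s 1) 0 = rot d r 0"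
    using rot_rot[of d] rot_add_self[of d r 0] d by simp_all
  moreover have "up_prod d ?s d = up_prod d ?s (Suc (Suc k))"
    using d by (simp del: up_prod.simps)
  ultimately have "up_prod d ?s d = up_prod d (rot d r 1) k \<circ> gen d (rot d r 0) \<circ> gen d ?s"
    using d by (simp only: up_prod_Suc_left zero_less_Suc)
  then show ?thesis
    using down_full_pow_orbit[of k d r v] d by simp
qed

lemma up_full_pow_moves:
  "0 < m \<Longrightarrow> m < d - 1 \<Longrightarrow> hd ((up_prod d r d ^^ m) (rot d r 1 # v)) \<noteq> rot d r 1"
  using up_full_pow_orbit[of "m - 1" d r v] by (cases m) (simp_all add: rot_eq_iff)

lemma down_full_pow_moves:
  "0 < m \<Longrightarrow> m < d - 1 \<Longrightarrow> hd ((down_prod d r d ^^ m) (rot d r (d - 1) # v)) \<noteq> rot d r (d - 1)"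
  using down_full_pow_orbit[of "m - 1" d r v] by (cases m) (simp_all add: rot_eq_iff)

(* The orbit of a under f has length exactly p, so p divides N and h ^^ (N div p) = id. *)

lemma funpow_eq_id_descent:
  assumes "2 \<le> p"
    and return: "\<And>v. (f ^^ p) (a # v) = a # h v"
    and moves: "\<And>m v. 0 < m \<Longrightarrow> m < p \<Longrightarrow> hd ((f ^^ m) (a # v)) \<noteq> a"
    and "f ^^ N = id" "0 < N"
  obtains q where "0 < q" "q < N" "h ^^ q = id"
proof -
  define q s where "q = N div p" and "s = N mod p"
  have return_pow: "((f ^^ p) ^^ n) (a # v) = a # (h ^^ n) v" for n v
    by (induction n arbitrary: v) (simp_all add: return)
  have "f ^^ N = f ^^ s \<circ> (f ^^ p) ^^ q"
    by (simp add: q_def s_def funpow_mult funpow_add[symmetric])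
  then have split: "(f ^^ s) (((f ^^ p) ^^ q) x) = x" for x
    using \<open>f ^^ N = id\<close> by (metis comp_apply id_apply)
  have "s = 0"
  proof (rule ccontr)
    assume "s \<noteq> 0"
    then have "hd ((f ^^ s) (a # (h ^^ q) [])) \<noteq> a"
      using moves \<open>2 \<le> p\<close> by (simp add: s_def)
    then show False
      using split[of "a # []"] return_pow[of q "[]"] by simp
  qed
  then have "(h ^^ q) v = v" for v
    using split[of "a # v"] return_pow[of q v] by simp
  then have "h ^^ q = id"
    by auto
  moreover have "0 < q" "q < N"
    using \<open>s = 0\<close> \<open>0 < N\<close> \<open>2 \<le> p\<close> by (auto simp: q_def s_def elim!: dvdE)
  ultimately show thesis
    using that by blast
qed

lemma up_down_funpow_neq_id:
  "3 \<le> d \<Longrightarrow> 0 < N \<Longrightarrow> up_prod d r d ^^ N \<noteq> id \<and> down_prod d r d ^^ N \<noteq> id"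
proof (induction N arbitrary: r rule: less_induct)
  case (less N)
  have "2 \<le> d - 1"
    using less.prems by simp
  show ?case
  proof (intro conjI notI)
    assume fid: "up_prod d r d ^^ N = id"
    obtain q where "0 < q" "q < N" "down_prod d (rot d r 2) d ^^ q = id"
      by (rule funpow_eq_id_descent[OF \<open>2 \<le> d - 1\<close> up_full_pow_return[OF less.prems(1)]])
        (use up_full_pow_moves less.prems fid in auto)
    then show False
      using less.IH less.prems by blast
  next
    assume fid: "down_prod d r d ^^ N = id"
    obtain q where "0 < q" "q < N" "up_prod d (rot d r (d - 1)) d ^^ q = id"
      by (rule funpow_eq_id_descent[OF \<open>2 \<le> d - 1\<close> down_full_pow_return[OF less.prems(1)]])
        (use down_full_pow_moves less.prems fid in auto)
    then show False
      using less.IH less.prems by blast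
  qed
qed

fun gen_inv :: "nat \<Rightarrow> nat \<Rightarrow> nat list \<Rightarrow> nat list" where
  "gen_inv d i [] = []"
| "gen_inv d i (y # w) =
     (if y = nxt d i then i # gen_inv d i w
      else if y = i then nxt d i # gen_inv d (nxt d i) w
      else y # w)"

lemma gen_inv_gen: "2 \<le> d \<Longrightarrow> gen_inv d i (gen d i w) = w"
proof (induction w arbitrary: i)
  case (Cons x w)
  have "nxt d i \<noteq> i"
    using Cons.prems by (simp add: nxt_def)
  then show ?case
    using Cons by auto
qed simp

lemma inj_up_prod: "2 \<le> d \<Longrightarrow> inj (up_prod d r k)"
proof (induction k)
  case (Suc k)
  have "inj (gen d (rot d r k))"
    using gen_inv_gen[OF Suc.prems] by (metis injI)
  then show ?case
    unfolding up_prod.simps using Suc by (blast intro: inj_compose)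
qed simp

lemma inj_funpow_finite_range:
  fixes f :: "'a \<Rightarrow> 'a"
  assumes "inj f" and "finite (range (\<lambda>n. f ^^ n))"
  obtains n where "0 < n" "f ^^ n = id"
proof -
  have "inj ((\<circ>) f :: ('a \<Rightarrow> 'a) \<Rightarrow> 'a \<Rightarrow> 'a)"
  proof (rule injI)
    fix g1 g2 :: "'a \<Rightarrow> 'a"
    assume "f \<circ> g1 = f \<circ> g2"
    then show "g1 = g2"
      using injD[OF assms(1)] by (metis comp_apply ext)
  qed
  moreover have orbit: "((\<circ>) f ^^ n) id = f ^^ n" for n
    by (induction n) simp_all
  moreover have "{g. \<exists>n. g = ((\<circ>) f ^^ n) id} = range (\<lambda>n. f ^^ n)"
    unfolding orbit by auto
  ultimately obtain n where "0 < n" "((\<circ>) f ^^ n) id = id"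
    using funpow_inj_finite assms(2) by metis
  then show thesis
    using that orbit by simp
qed

lemma Gd_comp_closed: "h \<in> Gd d \<Longrightarrow> g \<in> Gd d \<Longrightarrow> g \<circ> h \<in> Gd d"
proof (induction h rule: Gd.induct)
  case (gen_mult h i)
  then show ?case
    by (metis Gd.gen_mult comp_assoc)
next
  case (gen_inv_mult h i)
  then show ?case
    by (metis Gd.gen_inv_mult comp_assoc)
qed simp

lemma gen_in_Gd: "i \<in> {1..d} \<Longrightarrow> gen d i \<in> Gd d"
  using Gd.gen_mult[OF Gd.ident] by simp

lemma up_prod_in_Gd: "0 < d \<Longrightarrow> up_prod d r k \<in> Gd d"
  by (induction k) (auto intro: Gd.ident Gd_comp_closed gen_in_Gd rot_in_letters)

lemma funpow_in_Gd: "g \<in> Gd d \<Longrightarrow> g ^^ n \<in> Gd d"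
  by (induction n) (simp_all add: Gd.ident Gd_comp_closed)

lemma sect_append: "sect g (u @ w) = sect (sect g u) w"
  unfolding sect_def by (simp add: add.commute)

lemma sect_replicate_self:
  assumes "\<And>v. g (a # v) = a # g v"
  shows "sect g (replicate k a) = g"
proof (induction k)
  case 0
  then show ?case
    by (simp add: sect_def)
next
  case (Suc k)
  have "sect g [a] = g"
    using assms by (simp add: sect_def)
  then show ?case
    using Suc sect_append[of g "[a]" "replicate k a"] by simp
qed

lemma funpow_Cons_self:
  "(\<And>v. g (a # v) = a # g v) \<Longrightarrow> (g ^^ n) (a # v) = a # (g ^^ n) v"
  by (induction n) simp_all

theorem theorem3p4:
  fixes d :: nat
  assumes "d \<ge> 3"
  shows "\<not> (\<exists>S. finite S \<and> S \<subseteq> Gd d \<and>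
            (\<forall>g \<in> Gd d. \<exists>k::nat. \<forall>u \<in> lists {1..d}. length u \<ge> k \<longrightarrow> sect g u \<in> S))"
proof
  assume "\<exists>S. finite S \<and> S \<subseteq> Gd d \<and>
            (\<forall>g \<in> Gd d. \<exists>k::nat. \<forall>u \<in> lists {1..d}. length u \<ge> k \<longrightarrow> sect g u \<in> S)"
  then obtain S where "finite S"
    and nucleus: "\<forall>g \<in> Gd d. \<exists>k. \<forall>u \<in> lists {1..d}. length u \<ge> k \<longrightarrow> sect g u \<in> S"
    by blast
  define c where "c = up_prod d 1 d"
  have c_fix: "c (1 # v) = 1 # c v" for v
    using up_full_fix[of d 1 v] rot_0[of 1 d] assms by (simp add: c_def)
  have "c ^^ n \<in> S" for n
  proof -
    have "c ^^ n \<in> Gd d"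
      using assms by (simp add: c_def funpow_in_Gd up_prod_in_Gd)
    then obtain k where "\<forall>u \<in> lists {1..d}. length u \<ge> k \<longrightarrow> sect (c ^^ n) u \<in> S"
      using nucleus by blast
    moreover have "replicate k 1 \<in> lists {1..d}"
      using assms by auto
    ultimately have "sect (c ^^ n) (replicate k 1) \<in> S"
      by simp
    then show ?thesis
      using sect_replicate_self[of "c ^^ n" 1 k] funpow_Cons_self[of c 1] c_fix by simp
  qed
  then have "finite (range (\<lambda>n. c ^^ n))"
    using \<open>finite S\<close> by (meson finite_subset image_subsetI)
  moreover have "inj c"
    using assms by (simp add: c_def inj_up_prod)
  ultimately obtain n where "0 < n" "c ^^ n = id"
    using inj_funpow_finite_range by blast
  then show False
    using up_down_funpow_neq_id[of d n 1] assms by (simp add: c_def)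
qed

end
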